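(* For $k=1,2,\dots$ let $f_k(x)=x+(-1)^k e^{e^k}$ and $p_k=\frac1k-\frac1{k+1}=\frac{1}{k(k+1)}$, and let $\mu$ be the probability measure on $\mathrm{Homeo}_+(\mathbb{R})$ with $\mu(\{f_k\})=p_k$. Then for every $x\in\mathbb{R}$ and every compact interval $J\subset\mathbb{R}$, almost surely $F_n(x)\in J$ for only finitely many $n$. The same conclusion holds if each $f_k$ is replaced by a map $\tilde f_k:\mathbb{R}\to\mathbb{R}$ (chosen with the same probability $p_k$) such that $\sup_{k\ge1}\sup_{x\in\mathbb{R}}|\tilde f_k(x)-f_k(x)|<\infty$.
   Context: Given the maps and probabilities, let $g_1,g_2,\dots$ be i.i.d. random maps, with $g_n$ equal to the $k$-th map with probability $p_k$, and $F_n=g_n\circ\cdots\circ g_1$. *)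

theory Defs
  imports "HOL-Probability.Probability"
begin

definition fmap :: "nat \<Rightarrow> real \<Rightarrow> real" where
  "fmap k x = x + (-1) ^ k * exp (exp (real k))"

definition pk :: "nat \<Rightarrow> real" where
  "pk k = 1 / real k - 1 / real (k + 1)"

primrec Fcomp :: "(nat \<Rightarrow> real \<Rightarrow> real) \<Rightarrow> (nat \<Rightarrow> 'a \<Rightarrow> nat) \<Rightarrow> nat \<Rightarrow> 'a \<Rightarrow> real \<Rightarrow> real" where
  "Fcomp g \<xi> 0 \<omega> = id"
| "Fcomp g \<xi> (Suc n) \<omega> = g (\<xi> n \<omega>) \<circ> Fcomp g \<xi> n \<omega>"

end

theory Submission
  imports Defs "HOL-Real_Asymp.Real_Asymp"
begin

text \<open>Each f_k is a translation by a jump of size e^(e^k), and these sizes grow so fast that a sum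
  of at most n jumps is dominated by its largest one. Since P(index \<ge> L) = 1/L, among the first n
  indices one exceeds \<surd>n except on an event of probability at most e^(1-\<surd>n), which is summable;
  by Borel-Cantelli this happens for all large n almost surely. Then |F_n(x)| is at least
  e^(e^\<surd>n) up to an error linear in n, so F_n(x) leaves every compact interval for good. Perturbing
  the maps by at most C only adds an error n C, which changes nothing.\<close>

definition jump :: "nat \<Rightarrow> real" where
  "jump k = (-1) ^ k * exp (exp (real k))"

lemma fmap_eq_translation: "fmap k y = y + jump k"
  by (simp add: fmap_def jump_def)

lemma abs_jump [simp]: "\<bar>jump k\<bar> = exp (exp (real k))"
  by (simp add: jump_def abs_mult)

lemma Fcomp_near_translations:
  assumes "\<And>i y. i < n \<Longrightarrow> \<bar>g (\<xi> i \<omega>) y - (y + t (\<xi> i \<omega>))\<bar> \<le> C"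
  shows "\<bar>Fcomp g \<xi> n \<omega> x - (x + (\<Sum>i<n. t (\<xi> i \<omega>)))\<bar> \<le> real n * C"
  using assms
proof (induction n)
  case 0
  then show ?case by simp
next
  case (Suc n)
  let ?y = "Fcomp g \<xi> n \<omega> x"
  have "\<bar>?y - (x + (\<Sum>i<n. t (\<xi> i \<omega>)))\<bar> \<le> real n * C"
    using Suc by simp
  moreover have "\<bar>g (\<xi> n \<omega>) ?y - (?y + t (\<xi> n \<omega>))\<bar> \<le> C"
    using Suc.prems by simp
  ultimately show ?case
    by (simp add: abs_le_iff algebra_simps)
qed

text \<open>The maximal terms all coincide, so they cannot cancel each other.\<close>
lemma abs_sum_ge_Max_term:
  fixes s :: "nat \<Rightarrow> real" and h :: "'b \<Rightarrow> nat"
  assumes A: "finite A" "A \<noteq> {}" and "0 \<le> u"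
    and small: "\<And>k. k < Max (h ` A) \<Longrightarrow> \<bar>s k\<bar> \<le> u"
  shows "\<bar>s (Max (h ` A))\<bar> - real (card A) * u \<le> \<bar>\<Sum>i\<in>A. s (h i)\<bar>"
proof -
  define K where "K = Max (h ` A)"
  define I where "I = {i \<in> A. h i = K}"
  have "K \<in> h ` A"
    unfolding K_def using A by simp
  then have "I \<noteq> {}"
    unfolding I_def by auto
  then have "1 \<le> card I"
    using A by (simp add: I_def Suc_le_eq card_gt_0_iff)
  then have top: "\<bar>s K\<bar> \<le> \<bar>\<Sum>i\<in>I. s (h i)\<bar>"
    by (simp add: I_def abs_mult mult_le_cancel_right1)
  have "h i < K" if "i \<in> A - I" for i
  proof -
    have "h i \<le> K"
      unfolding K_def using that A by simp
    then show ?thesis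
      using that by (auto simp: I_def)
  qed
  then have "\<bar>s (h i)\<bar> \<le> u" if "i \<in> A - I" for i
    using small that unfolding K_def by blast
  then have "\<bar>\<Sum>i\<in>A - I. s (h i)\<bar> \<le> real (card (A - I)) * u"
    by (rule order.trans[OF sum_abs sum_bounded_above])
  also have "\<dots> \<le> real (card A) * u"
    using A \<open>0 \<le> u\<close> by (intro mult_right_mono) (auto intro: card_mono)
  finally have rest: "\<bar>\<Sum>i\<in>A - I. s (h i)\<bar> \<le> real (card A) * u" .
  have "(\<Sum>i\<in>A. s (h i)) = (\<Sum>i\<in>I. s (h i)) + (\<Sum>i\<in>A - I. s (h i))"
    using A by (simp add: I_def sum.subset_diff[of "I" A])
  then show ?thesis
    using top rest unfolding K_def by linarith
qed

lemma exp_le_exp_exp_pred: "exp (real K) \<le> exp (exp (real K - 1))"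
  using exp_ge_add_one_self[of "real K - 1"] by simp

lemma exp_exp_pred_squared_le: "exp (exp (real K - 1)) ^ 2 \<le> exp (exp (real K))"
proof -
  have "2 * exp (real K - 1) \<le> exp 1 * exp (real K - 1)"
    using exp_ge_add_one_self[of 1] by (intro mult_right_mono) auto
  then have "exp (real K - 1) + exp (real K - 1) \<le> exp (real K)"
    by (simp flip: exp_add)
  then show ?thesis
    by (simp add: power2_eq_square flip: exp_add)
qed

lemma abs_sum_jump_ge:
  assumes "finite A" "A \<noteq> {}"
  shows "exp (exp (real (Max (h ` A)))) - real (card A) * exp (exp (real (Max (h ` A)) - 1))
           \<le> \<bar>\<Sum>i\<in>A. jump (h i)\<bar>"
proof -
  have "\<bar>jump k\<bar> \<le> exp (exp (real (Max (h ` A)) - 1))" if "k < Max (h ` A)" for k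
    using that by simp
  from abs_sum_ge_Max_term[OF assms _ this] show ?thesis
    by simp
qed

lemma Fcomp_escapes:
  assumes near: "\<And>k y. 1 \<le> k \<Longrightarrow> \<bar>g k y - fmap k y\<bar> \<le> C"
    and "0 \<le> C" "0 \<le> B"
    and pos: "\<And>i. i < n \<Longrightarrow> 1 \<le> \<xi> i \<omega>"
    and i: "i < n" "real n * (1 + C) + \<bar>x\<bar> + B < exp (real (\<xi> i \<omega>))"
  shows "B < \<bar>Fcomp g \<xi> n \<omega> x\<bar>"
proof -
  define S where "S = (\<Sum>i<n. jump (\<xi> i \<omega>))"
  define K where "K = Max ((\<lambda>i. \<xi> i \<omega>) ` {..<n})"
  define u where "u = exp (exp (real K - 1))"
  define W where "W = real n * C + \<bar>x\<bar> + B"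
  have close: "\<bar>Fcomp g \<xi> n \<omega> x - (x + S)\<bar> \<le> real n * C"
    unfolding S_def using near pos
    by (intro Fcomp_near_translations) (simp add: fmap_eq_translation)
  have "{..<n} \<noteq> {}"
    using i(1) by auto
  then have "u * u - real n * u \<le> \<bar>S\<bar>"
    using abs_sum_jump_ge[of "{..<n}" "\<lambda>i. \<xi> i \<omega>"] exp_exp_pred_squared_le[of K]
    unfolding S_def K_def u_def power2_eq_square by simp
  have "\<xi> i \<omega> \<le> K"
    unfolding K_def using i(1) by simp
  then have "exp (real (\<xi> i \<omega>)) \<le> u"
    unfolding u_def using exp_le_exp_exp_pred[of K] by (meson exp_le_cancel_iff of_nat_le_iff order.trans)
  then have "W < u - real n"
    using i(2) unfolding W_def by (simp add: algebra_simps)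
  have "1 \<le> u"
    unfolding u_def by simp
  have "0 \<le> W"
    using \<open>0 \<le> C\<close> \<open>0 \<le> B\<close> unfolding W_def by simp
  then have "W \<le> u * W"
    using \<open>1 \<le> u\<close> by (simp add: mult_le_cancel_right1)
  also have "\<dots> < u * (u - real n)"
    using \<open>W < u - real n\<close> \<open>1 \<le> u\<close> by simp
  also have "\<dots> \<le> \<bar>S\<bar>"
    using \<open>u * u - real n * u \<le> \<bar>S\<bar>\<close> by (simp add: algebra_simps)
  finally have "W < \<bar>S\<bar>" .
  then show ?thesis
    using close unfolding W_def by linarith
qed

lemma sum_pk_atLeastLessThan: "L \<le> N \<Longrightarrow> (\<Sum>k=L..<N. pk k) = 1 / real L - 1 / real N"
  using sum_Suc_diff'[of L N "\<lambda>k. - (1 / real k)"] by (simp add: pk_def)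

locale pk_indices = prob_space M for M :: "'a measure" +
  fixes \<xi> :: "nat \<Rightarrow> 'a \<Rightarrow> nat"
  assumes indep: "indep_vars (\<lambda>_. count_space UNIV) \<xi> UNIV"
    and distr: "\<And>n k. 1 \<le> k \<Longrightarrow> prob {\<omega> \<in> space M. \<xi> n \<omega> = k} = pk k"
begin

lemma measurable_index [measurable]: "\<xi> i \<in> M \<rightarrow>\<^sub>M count_space UNIV"
  using indep unfolding indep_vars_def2 by auto

lemma prob_index_less:
  assumes "1 \<le> L"
  shows "prob {\<omega> \<in> space M. \<xi> n \<omega> < L} \<le> 1 - 1 / real L"
proof (rule LIMSEQ_le_const)
  show "(\<lambda>N. 1 - 1 / real L + 1 / real N) \<longlonglongrightarrow> 1 - 1 / real L"
    using tendsto_add[OF tendsto_const lim_1_over_n] by simp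
  show "\<exists>N0. \<forall>N\<ge>N0. prob {\<omega> \<in> space M. \<xi> n \<omega> < L} \<le> 1 - 1 / real L + 1 / real N"
  proof (intro exI allI impI)
    fix N assume "L \<le> N"
    define U where "U = (\<Union>k\<in>{L..<N}. {\<omega> \<in> space M. \<xi> n \<omega> = k})"
    have "prob U = (\<Sum>k=L..<N. prob {\<omega> \<in> space M. \<xi> n \<omega> = k})"
      unfolding U_def by (intro measure_finite_Union) (auto simp: disjoint_family_on_def)
    also have "\<dots> = 1 / real L - 1 / real N"
      using \<open>1 \<le> L\<close> \<open>L \<le> N\<close> by (simp add: distr sum_pk_atLeastLessThan)
    finally have "prob U = 1 / real L - 1 / real N" .
    moreover have "{\<omega> \<in> space M. \<xi> n \<omega> < L} \<subseteq> space M - U"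
      unfolding U_def by auto
    then have "prob {\<omega> \<in> space M. \<xi> n \<omega> < L} \<le> 1 - prob U"
      using finite_measure_mono[of _ "space M - U"] prob_compl[of U] by (simp add: U_def)
    ultimately show "prob {\<omega> \<in> space M. \<xi> n \<omega> < L} \<le> 1 - 1 / real L + 1 / real N"
      by simp
  qed
qed

lemma AE_index_ge_1: "AE \<omega> in M. \<forall>i. 1 \<le> \<xi> i \<omega>"
proof (subst AE_all_countable, intro allI)
  fix i
  have "prob {\<omega> \<in> space M. \<xi> i \<omega> < 1} = 0"
    using prob_index_less[of 1 i] measure_nonneg[of M] by (simp add: order_antisym)
  then show "AE \<omega> in M. 1 \<le> \<xi> i \<omega>"
    by (intro AE_I[where N="{\<omega> \<in> space M. \<xi> i \<omega> < 1}"]) (auto simp: emeasure_eq_measure)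
qed

lemma prob_all_indices_less:
  assumes "1 \<le> L"
  shows "prob {\<omega> \<in> space M. \<forall>i<n. \<xi> i \<omega> < L} \<le> (1 - 1 / real L) ^ n"
proof (cases "n = 0")
  case False
  define A where "A i = \<xi> i -` {..<L} \<inter> space M" for i
  have "indep_sets (\<lambda>i. {\<xi> i -` A \<inter> space M | A. A \<in> sets (count_space UNIV)}) UNIV"
    using indep unfolding indep_vars_def2 by auto
  then have "prob (\<Inter>i\<in>{..<n}. A i) = (\<Prod>i<n. prob (A i))"
    using False by (intro indep_setsD) (auto simp: A_def)
  moreover have "(\<Inter>i\<in>{..<n}. A i) = {\<omega> \<in> space M. \<forall>i<n. \<xi> i \<omega> < L}"
    using False by (auto simp: A_def)
  moreover have "prob (A i) \<le> 1 - 1 / real L" for i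
    using prob_index_less[OF assms, of i] by (simp add: A_def Int_def conj_commute)
  ultimately show ?thesis
    using prod_mono[of "{..<n}" "\<lambda>i. prob (A i)" "\<lambda>_. 1 - 1 / real L"] by simp
qed simp

lemma prob_all_indices_below_sqrt:
  assumes "1 \<le> n"
  shows "prob {\<omega> \<in> space M. \<forall>i<n. real (\<xi> i \<omega>) < sqrt (real n)} \<le> exp (1 - sqrt (real n))"
proof -
  define L where "L = nat \<lceil>sqrt (real n)\<rceil>"
  have "1 \<le> sqrt (real n)"
    using assms by simp
  then have L: "1 \<le> L" "real L < sqrt (real n) + 1"
    unfolding L_def by linarith+
  have "real k < sqrt (real n) \<longleftrightarrow> k < L" for k
    unfolding L_def by linarith
  then have "prob {\<omega> \<in> space M. \<forall>i<n. real (\<xi> i \<omega>) < sqrt (real n)} \<le> (1 - 1 / real L) ^ n"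
    using prob_all_indices_less[OF L(1), of n] by simp
  also have "\<dots> \<le> exp (- (1 / real L)) ^ n"
    using exp_ge_add_one_self[of "- (1 / real L)"] L(1) by (intro power_mono) auto
  also have "\<dots> = exp (- (real n / real L))"
    by (simp flip: exp_of_nat_mult)
  also have "\<dots> \<le> exp (1 - sqrt (real n))"
  proof -
    have "(sqrt (real n) - 1) * real L \<le> (sqrt (real n) - 1) * (sqrt (real n) + 1)"
      using L \<open>1 \<le> sqrt (real n)\<close> by (intro mult_left_mono) auto
    also have "\<dots> \<le> real n"
      by (simp add: algebra_simps)
    finally show ?thesis
      using L(1) by (simp add: field_simps)
  qed
  finally show ?thesis .
qed

text \<open>Borel-Cantelli applies since e^(1-\<surd>n) \<le> 1/n^2 for large n.\<close>
lemma AE_eventually_index_ge_sqrt: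
  "AE \<omega> in M. eventually (\<lambda>n. \<exists>i<n. sqrt (real n) \<le> real (\<xi> i \<omega>)) sequentially"
proof -
  define A where "A n = {\<omega> \<in> space M. \<forall>i<n. real (\<xi> i \<omega>) < sqrt (real n)}" for n
  have "eventually (\<lambda>n. exp (1 - sqrt (real n)) \<le> 1 / real n ^ 2) sequentially"
    by real_asymp
  then have "eventually (\<lambda>n. norm (prob (A n)) \<le> 1 / real n ^ 2) sequentially"
    using eventually_ge_at_top[of 1]
    by eventually_elim (use prob_all_indices_below_sqrt in \<open>force simp: A_def\<close>)
  moreover have "summable (\<lambda>n. 1 / real n ^ 2)"
    using inverse_power_summable[of 2, where 'a=real] by (simp add: inverse_eq_divide)
  ultimately have "summable (\<lambda>n. prob (A n))"
    by (rule summable_comparison_test_ev)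
  then have "AE \<omega> in M. eventually (\<lambda>n. \<omega> \<in> space M - A n) sequentially"
    by (intro borel_cantelli_AE1) (auto simp: A_def less_top[symmetric])
  then show ?thesis
    by eventually_elim (auto elim!: eventually_mono simp: A_def not_less)
qed

lemma AE_finite_visits:
  assumes near: "\<And>k y. 1 \<le> k \<Longrightarrow> \<bar>g k y - fmap k y\<bar> \<le> C"
  shows "AE \<omega> in M. finite {n. Fcomp g \<xi> n \<omega> x \<in> {a..b}}"
  using AE_index_ge_1 AE_eventually_index_ge_sqrt
proof eventually_elim
  case (elim \<omega>)
  define C' where "C' = max C 0"
  define B where "B = \<bar>a\<bar> + \<bar>b\<bar>"
  have near': "\<bar>g k y - fmap k y\<bar> \<le> C'" if "1 \<le> k" for k y
    using near[OF that] unfolding C'_def by (simp add: le_max_iff_disj)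
  have "eventually (\<lambda>n. real n * (1 + C') + \<bar>x\<bar> + B < exp (sqrt (real n))) sequentially"
    by real_asymp
  with elim(2) have "eventually (\<lambda>n. Fcomp g \<xi> n \<omega> x \<notin> {a..b}) sequentially"
  proof eventually_elim
    case (elim n)
    then obtain i where i: "i < n" "real n * (1 + C') + \<bar>x\<bar> + B < exp (real (\<xi> i \<omega>))"
      by (meson exp_le_cancel_iff less_le_trans)
    have "0 \<le> C'" "0 \<le> B" "\<And>i. 1 \<le> \<xi> i \<omega>"
      using \<open>\<forall>i. 1 \<le> \<xi> i \<omega>\<close> unfolding C'_def B_def by simp_all
    with near' i have "B < \<bar>Fcomp g \<xi> n \<omega> x\<bar>"
      by (intro Fcomp_escapes[where \<xi>=\<xi> and \<omega>=\<omega>]) auto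
    then show ?case
      unfolding B_def by auto
  qed
  then show ?case
    by (simp add: eventually_cofinite flip: cofinite_eq_sequentially)
qed

end

theorem mainTheorem11:
  fixes M :: "'a measure" and \<xi> :: "nat \<Rightarrow> 'a \<Rightarrow> nat"
  assumes "prob_space M"
    and "prob_space.indep_vars M (\<lambda>_. count_space UNIV) \<xi> UNIV"
    and "\<And>n k. k \<ge> 1 \<Longrightarrow> measure M {\<omega> \<in> space M. \<xi> n \<omega> = k} = pk k"
  shows "(\<forall>x::real. \<forall>a b::real.
            AE \<omega> in M. finite {n. Fcomp fmap \<xi> n \<omega> x \<in> {a..b}})
       \<and> (\<forall>g :: nat \<Rightarrow> real \<Rightarrow> real.
            (\<exists>C. \<forall>k\<ge>1. \<forall>y. \<bar>g k y - fmap k y\<bar> \<le> C) \<longrightarrow>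
            (\<forall>x::real. \<forall>a b::real.
              AE \<omega> in M. finite {n. Fcomp g \<xi> n \<omega> x \<in> {a..b}}))"
proof -
  interpret pk_indices M \<xi>
    using assms by (simp add: pk_indices_def pk_indices_axioms_def)
  show ?thesis
  proof (intro conjI allI impI)
    fix x a b :: real
    show "AE \<omega> in M. finite {n. Fcomp fmap \<xi> n \<omega> x \<in> {a..b}}"
      by (rule AE_finite_visits[where C=0]) simp
  next
    fix g :: "nat \<Rightarrow> real \<Rightarrow> real" and x a b :: real
    assume "\<exists>C. \<forall>k\<ge>1. \<forall>y. \<bar>g k y - fmap k y\<bar> \<le> C"
    then obtain C where "\<And>k y. 1 \<le> k \<Longrightarrow> \<bar>g k y - fmap k y\<bar> \<le> C"
      by blast
    then show "AE \<omega> in M. finite {n. Fcomp g \<xi> n \<omega> x \<in> {a..b}}"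
      by (rule AE_finite_visits)
  qed
qed

end
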